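(* (i) There is $r^\Delta\in R_{\omega\cdot\omega+\omega}$ such that $\sigma(r^\Delta)\in Q_*$ and $\sigma(p\Lsh r^\Delta)\in Q_*$ for all $p\in R$. (ii) There is $r^{\mathrm{mult}}\in R_{\omega\cdot\omega+\omega}$ such that for every $\phi\in Q_*$ there is $r\in R_{\omega\cdot\omega+\omega}$ with $\sigma(r^{\mathrm{mult}})\circ\phi=\sigma(r)$.
   Context: Throughout, $\delta$ denotes a nonzero countable limit ordinal. Terms: variables are $x_{l,k}$ ($l,k\in\omega$), each taking values in $\{0,1\}$. A term $t$ is given by a finite sequence of variables $(v_0,\dots,v_{r-1})$ and a function $F:2^r\to2$; a variable $v$ is identified with the term $((v),\mathrm{id})$. An assignment $a$ maps variables to $\{0,1\}$ and extends to terms by $t\circ a=F(v_0\circ a,\dots,v_{r-1}\circ a)$. A substitution $\phi$ maps variables to terms; $t\circ\phi$ replaces each variable $v$ in $t$ by $\phi(v)$, and $\bar t\circ\phi=(t_i\circ\phi)_i$ for families. Terms are identified modulo $t=^*s$ iff $t\circ a=s\circ a$ for all assignments $a$. A term depends only on variables in $Y$ if it is $=^*$ to a term using only variables from $Y$. A term or variable $s$ is determined by terms $t_0,\dots,t_n$ if for all assignments $a,b$, $(t_i\circ a)_{i\le n}=(t_i\circ b)_{i\le n}$ implies $s\circ a=s\circ b$. $Q_*$: let $\tau(n,m)=n+\tfrac12(n+m)(n+m+1)$ and $(i,j)\unlhd(n,m)$ iff $\tau(i,j)\le\tau(n,m)$. $Q_*$ is the set of squares $\bar t=(t_{n,m})_{n,m\in\omega}$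 of terms with (1) $t_{n,m}$ depends only on $x_{i,j}$ with $(i,j)\unlhd(n,m)$, (2) each $x_{i,j}$ is determined by finitely many $t_{n,m}$; an element $\phi\in Q_*$ is regarded as the substitution $x_{i,j}\mapsto\phi_{i,j}$, and $\bar t\le\bar s$ iff $\bar t=\bar s\circ\phi$ for some $\phi\in Q_*$. The forcing $\tilde P$: a condition $\tilde p$ has height $\mathrm{ht}(\tilde p)<\omega_1$ and consists of, for every limit $\delta<\mathrm{ht}(\tilde p)$ and $n,m,k\in\omega$: a cofinal $\nu_{\delta,n,m}\subseteq\delta$ of order type $\omega$, with $\nu_{\delta,n,m_1}\cap\nu_{\delta,n,m_2}=\emptyset$ for $m_1\ne m_2$; a strictly increasing $j_{\delta,n,m}:\omega\to\omega$; and a surjective $f_{\delta,n,m,k}:2^{[j_{\delta,n,m}(k),\,j_{\delta,n,m}(k+1)-1]}\to2$; ordered by extension. For $\eta$ into $2$ with domain containing $\nu_{\delta,n,m}$, with $\zeta_i$ the $i$-th element of $\nu_{\delta,n,m}$, $g_{\delta,n,m,k}(\eta)=f_{\delta,n,m,k}((\eta(\zeta_i))_{j_{\delta,n,m}(k)\le i<j_{\delta,n,m}(k+1)})$. The set $R$: $R=\bigcup_{\delta<\omega_1}R_{\delta+\omega}$, where $p\in R_{\delta+\omega}$ consists of $\tilde p\in\tilde P$ with $\mathrm{ht}(\tilde p)=\delta+1$ and terms $\bar p=(p_{n,\alpha})_{n\in\omega,\alpha<\delta+\omega}$ such that $p_{n,\delta+m}=x_{n,m}$; for $\alpha<\delta$,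 $p_{n,\alpha}$ depends only on variables $x_{l,k}$ with $l<n$; and for all $n,m\in\omega$ and all limit $\alpha\le\delta$ there is $k_0$ such that for every assignment $a$, $p_{n,\alpha+m}\circ a=g_{\alpha,n,m,k}((p_{n+1,\zeta}\circ a)_{\zeta<\alpha})$ for all $k\ge k_0$ (computed from $\tilde p$). For $p\in R$, $\sigma(p)=(p_{n,m})_{n,m\in\omega}$. Stacking: for $p\in R_{\delta+\omega}$ and $q'\in R_{\delta'+\omega}$, $q=p\Lsh q'\in R_{\delta+\delta'+\omega}$ is defined by: $\tilde q$ agrees with $\tilde p$ on all limit indices $\le\delta$; for limit $\alpha$ with $\omega\le\alpha\le\delta'$, $\nu^q_{\delta+\alpha,n,m}=\{\delta+\beta:\beta\in\nu^{q'}_{\alpha,n,m}\}$, $j^q_{\delta+\alpha,n,m}=j^{q'}_{\alpha,n,m}$, $f^q_{\delta+\alpha,n,m,k}=f^{q'}_{\alpha,n,m,k}$; $q_{n,\delta+\alpha}=q'_{n,\alpha}$ for $\alpha<\delta'+\omega$; and $q_{n,\alpha}=p_{n,\alpha}\circ\phi$ for $\alpha<\delta$, where $\phi(x_{n,m})=q'_{n,m}$. *)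

theory Defs
  imports Main "HOL-Library.Countable_Set"
begin

section \<open>Terms (identified with their semantics, i.e. modulo =*)\<close>

type_synonym var = "nat \<times> nat"          \<comment> \<open>x_{l,k} is (l,k)\<close>
type_synonym assign = "var \<Rightarrow> bool"
type_synonym trm = "assign \<Rightarrow> bool"

text \<open>A term is a function of finitely many variables (a finite variable list and F : 2^r -> 2).\<close>
definition is_term :: "trm \<Rightarrow> bool" where
  "is_term t \<longleftrightarrow> (\<exists>V. finite V \<and> (\<forall>a b. (\<forall>v\<in>V. a v = b v) \<longrightarrow> t a = t b))"

definition depends_only :: "trm \<Rightarrow> var set \<Rightarrow> bool" where
  "depends_only t Y \<longleftrightarrow> (\<exists>V. finite V \<and> V \<subseteq> Y \<and> (\<forall>a b. (\<forall>v\<in>V. a v = b v) \<longrightarrow> t a = t b))"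

definition subst :: "trm \<Rightarrow> (var \<Rightarrow> trm) \<Rightarrow> trm" where
  "subst t \<phi> = (\<lambda>a. t (\<lambda>v. \<phi> v a))"

type_synonym square = "nat \<Rightarrow> nat \<Rightarrow> trm"

definition tau :: "nat \<Rightarrow> nat \<Rightarrow> nat" where
  "tau n m = n + (n + m) * (n + m + 1) div 2"

definition inQ :: "square \<Rightarrow> bool" where
  "inQ t \<longleftrightarrow>
     (\<forall>n m. is_term (t n m) \<and> depends_only (t n m) {(i, j). tau i j \<le> tau n m}) \<and>
     (\<forall>i j. \<exists>S. finite S \<and>
        (\<forall>a b. (\<forall>(n, m)\<in>S. t n m a = t n m b) \<longrightarrow> a (i, j) = b (i, j)))"

definition sq_subst :: "square \<Rightarrow> square \<Rightarrow> square" where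
  "sq_subst t \<phi> = (\<lambda>n m. subst (t n m) (\<lambda>(i, j). \<phi> i j))"

section \<open>Ordinals as well-orders (BNF-style relations)\<close>

definition lt :: "'p rel \<Rightarrow> 'p \<Rightarrow> 'p \<Rightarrow> bool" where
  "lt W x y \<longleftrightarrow> (x, y) \<in> W \<and> x \<noteq> y"

definition is_limit_pt :: "'p rel \<Rightarrow> 'p \<Rightarrow> bool" where
  "is_limit_pt W x \<longleftrightarrow> x \<in> Field W \<and> (\<exists>y. lt W y x) \<and>
     (\<forall>y. lt W y x \<longrightarrow> (\<exists>z. lt W y z \<and> lt W z x))"

definition ord_plus :: "'p rel \<Rightarrow> 'p \<Rightarrow> nat \<Rightarrow> 'p" where
  "ord_plus W x m = (THE y. y \<in> Field W \<and> (x, y) \<in> W \<and>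
       finite {z. (x, z) \<in> W \<and> lt W z y} \<and> card {z. (x, z) \<in> W \<and> lt W z y} = m)"

definition ord_nth :: "'p rel \<Rightarrow> nat \<Rightarrow> 'p" where
  "ord_nth W m = (THE y. y \<in> Field W \<and> finite {z. lt W z y} \<and> card {z. lt W z y} = m)"

definition nz_countable_limit :: "'a rel \<Rightarrow> bool" where
  "nz_countable_limit r \<longleftrightarrow> Well_order r \<and> countable (Field r) \<and> Field r \<noteq> {} \<and>
     (\<forall>x\<in>Field r. \<exists>y. lt r x y)"

definition osum :: "'a rel \<Rightarrow> 'b rel \<Rightarrow> ('a + 'b) rel" where
  "osum r s = map_prod Inl Inl ` r \<union> map_prod Inr Inr ` s \<union> (Inl ` Field r) \<times> (Inr ` Field s)"

definition nat_le :: "nat rel" where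
  "nat_le = {(x, y). x \<le> y}"

text \<open>delta + omega; positions Inl alpha = alpha < delta, Inr m = delta + m\<close>
definition plus_omega :: "'a rel \<Rightarrow> ('a + nat) rel" where
  "plus_omega r = osum r nat_le"

text \<open>omega * omega, as the lexicographic order on nat x nat\<close>
definition oo :: "(nat \<times> nat) rel" where
  "oo = {((a, b), (c, d)). a < c \<or> (a = c \<and> b \<le> d)}"

text \<open>nu_{lambda,n,m} is given by its increasing enumeration (i -> zeta_i);
  functions f : 2^[j(k), j(k+1)-1] -> 2 are given extensionally as maps on nat => bool
  that only look at the indices in that interval.\<close>
record 'p cond =
  nu :: "'p \<Rightarrow> nat \<Rightarrow> nat \<Rightarrow> nat \<Rightarrow> 'p"
  jj :: "'p \<Rightarrow> nat \<Rightarrow> nat \<Rightarrow> nat \<Rightarrow> nat"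
  ff :: "'p \<Rightarrow> nat \<Rightarrow> nat \<Rightarrow> nat \<Rightarrow> (nat \<Rightarrow> bool) \<Rightarrow> bool"
  tm :: "nat \<Rightarrow> 'p \<Rightarrow> trm"

definition tilde_ok :: "'p rel \<Rightarrow> ('p, 'z) cond_scheme \<Rightarrow> bool" where
  "tilde_ok W c \<longleftrightarrow> (\<forall>l. is_limit_pt W l \<longrightarrow>
     (\<forall>n m.
        (\<forall>i. lt W (nu c l n m i) l) \<and>
        (\<forall>i. lt W (nu c l n m i) (nu c l n m (Suc i))) \<and>
        (\<forall>b. lt W b l \<longrightarrow> (\<exists>i. (b, nu c l n m i) \<in> W)) \<and>
        strict_mono (jj c l n m) \<and>
        (\<forall>k. (\<forall>\<eta> \<eta>'. (\<forall>i. jj c l n m k \<le> i \<and> i \<le> jj c l n m (Suc k) - 1 \<longrightarrow> \<eta> i = \<eta>' i)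
                 \<longrightarrow> ff c l n m k \<eta> = ff c l n m k \<eta>') \<and>
             (\<exists>\<eta>. ff c l n m k \<eta>) \<and> (\<exists>\<eta>. \<not> ff c l n m k \<eta>))) \<and>
     (\<forall>n m1 m2. m1 \<noteq> m2 \<longrightarrow> range (nu c l n m1) \<inter> range (nu c l n m2) = {}))"

definition gfun :: "('p, 'z) cond_scheme \<Rightarrow> 'p \<Rightarrow> nat \<Rightarrow> nat \<Rightarrow> nat \<Rightarrow> ('p \<Rightarrow> bool) \<Rightarrow> bool" where
  "gfun c l n m k \<eta> = ff c l n m k (\<lambda>i. \<eta> (nu c l n m i))"

definition inR :: "'a rel \<Rightarrow> ('a + nat) cond \<Rightarrow> bool" where
  "inR r p \<longleftrightarrow> nz_countable_limit r \<and> tilde_ok (plus_omega r) p \<and>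
     (\<forall>n \<alpha>. \<alpha> \<in> Field (plus_omega r) \<longrightarrow> is_term (tm p n \<alpha>)) \<and>
     (\<forall>n m. tm p n (Inr m) = (\<lambda>a. a (n, m))) \<and>
     (\<forall>n \<alpha>. \<alpha> \<in> Field r \<longrightarrow> depends_only (tm p n (Inl \<alpha>)) {(l, k). l < n}) \<and>
     (\<forall>n m l. is_limit_pt (plus_omega r) l \<longrightarrow>
        (\<exists>k0. \<forall>a k. k0 \<le> k \<longrightarrow>
           tm p n (ord_plus (plus_omega r) l m) a = gfun p l n m k (\<lambda>\<zeta>. tm p (Suc n) \<zeta> a)))"

definition sigma :: "'a rel \<Rightarrow> ('a + nat) cond \<Rightarrow> square" where
  "sigma r p = (\<lambda>n m. tm p n (Inl (ord_nth r m)))"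

definition emb1 :: "'b rel \<Rightarrow> 'a + nat \<Rightarrow> ('a + 'b) + nat" where
  "emb1 s x = (case x of Inl \<alpha> \<Rightarrow> Inl (Inl \<alpha>) | Inr m \<Rightarrow> Inl (Inr (ord_nth s m)))"

definition emb2 :: "'b + nat \<Rightarrow> ('a + 'b) + nat" where
  "emb2 x = (case x of Inl \<beta> \<Rightarrow> Inl (Inr \<beta>) | Inr m \<Rightarrow> Inr m)"

definition stack :: "'a rel \<Rightarrow> 'b rel \<Rightarrow> ('a + nat) cond \<Rightarrow> ('b + nat) cond \<Rightarrow> (('a + 'b) + nat) cond" where
  "stack r s p q =
    (let L1 = {l. is_limit_pt (plus_omega r) l}; L2 = {l. is_limit_pt (plus_omega s) l};
         back1 = inv_into L1 (emb1 s); back2 = inv_into L2 emb2 in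
     \<lparr> nu = (\<lambda>l n m i. if l \<in> emb1 s ` L1 then emb1 s (nu p (back1 l) n m i)
                       else if l \<in> emb2 ` L2 then emb2 (nu q (back2 l) n m i) else undefined),
       jj = (\<lambda>l n m. if l \<in> emb1 s ` L1 then jj p (back1 l) n m
                       else if l \<in> emb2 ` L2 then jj q (back2 l) n m else undefined),
       ff = (\<lambda>l n m k. if l \<in> emb1 s ` L1 then ff p (back1 l) n m k
                       else if l \<in> emb2 ` L2 then ff q (back2 l) n m k else undefined),
       tm = (\<lambda>n x. case x of
                Inl (Inl \<alpha>) \<Rightarrow> subst (tm p n (Inl \<alpha>)) (\<lambda>(n', m'). tm q n' (Inl (ord_nth s m')))
              | Inl (Inr \<beta>) \<Rightarrow> tm q n (Inl \<beta>)
              | Inr m \<Rightarrow> tm q n (Inr m)) \<rparr>)"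

end

theory Submission
  imports Defs "HOL-Library.Nat_Bijection"
begin

text \<open>Both witnesses are \<open>univ_cond id_sq\<close>, whose \<open>\<sigma>\<close> is the square \<open>enum_sq\<close> listing,
  in row \<open>n\<close>, all variables coded below \<open>tau n 0\<close>. For \<open>\<phi> \<in> Q\<^sub>*\<close> the condition
  \<open>univ_cond \<phi>\<close> has \<open>\<sigma> = enum_sq \<circ> \<phi>\<close>, which is (ii). Its block \<open>\<omega>\<cdot>a\<close>
  (\<open>a \<ge> 1\<close>) holds \<open>x\<^sub>v\<close> in row \<open>n\<close> as soon as \<open>x\<^sub>v\<close> is a function of the entries of
  \<open>\<phi>\<close> coded below \<open>tau (n + a) 0\<close>. At \<open>\<omega>\<close> such a function is evaluated on one period
  of \<open>enum_sq \<circ> \<phi>\<close> in row \<open>n + 1\<close>, the later blocks just shift this, and since every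
  variable is determined by finitely many entries of \<open>\<phi>\<close>, the terms \<open>x\<^sub>v\<close> eventually
  appear along the ladder to \<open>\<omega>\<cdot>\<omega>\<close>.

  For (i), \<open>\<sigma>(p \<Lsh> r) = \<sigma>(p) \<circ> enum_sq\<close>. Each variable is an entry of \<open>enum_sq\<close> at
  some variable \<open>x\<^sub>w\<close>, and \<open>x\<^sub>w\<close>, a term of \<open>p\<close>, is determined by finitely many
  entries of \<open>\<sigma>(p)\<close> by induction along \<open>\<delta> + \<omega>\<close>.\<close>

section \<open>Well-orders\<close>

lemma osum_simps [simp]:
  "(Inl a, Inl b) \<in> osum r s \<longleftrightarrow> (a, b) \<in> r"
  "(Inl a, Inr c) \<in> osum r s \<longleftrightarrow> a \<in> Field r \<and> c \<in> Field s"
  "(Inr c, Inl a) \<notin> osum r s"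
  "(Inr c, Inr d) \<in> osum r s \<longleftrightarrow> (c, d) \<in> s"
  unfolding osum_def by auto

lemma lt_osum [simp]:
  "lt (osum r s) (Inl a) (Inl b) \<longleftrightarrow> lt r a b"
  "lt (osum r s) (Inl a) (Inr c) \<longleftrightarrow> a \<in> Field r \<and> c \<in> Field s"
  "\<not> lt (osum r s) (Inr c) (Inl a)"
  "lt (osum r s) (Inr c) (Inr d) \<longleftrightarrow> lt s c d"
  unfolding lt_def by auto

lemma Field_osum: "Field (osum r s) = Inl ` Field r \<union> Inr ` Field s"
  unfolding osum_def Field_def by (auto 4 4 intro: rev_image_eqI)

lemma Field_nat_le [simp]: "Field nat_le = UNIV"
  unfolding nat_le_def Field_def by auto

lemma Field_plus_omega: "Field (plus_omega r) = Inl ` Field r \<union> range Inr"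
  unfolding plus_omega_def Field_osum by simp

lemma Linear_order_osum:
  assumes r: "Linear_order r" and s: "Linear_order s"
  shows "Linear_order (osum r s)"
proof -
  have rr: "refl_on (Field r) r" "trans r" "antisym r" "total_on (Field r) r"
    and ss: "refl_on (Field s) s" "trans s" "antisym s" "total_on (Field s) s"
    using r s unfolding order_on_defs by auto
  show ?thesis
    unfolding order_on_defs
  proof (intro conjI)
    show "osum r s \<subseteq> Field (osum r s) \<times> Field (osum r s)"
      by (auto intro: FieldI1 FieldI2)
    show "refl_on (Field (osum r s)) (osum r s)"
      using rr(1) ss(1) by (auto simp: refl_on_def Field_osum intro: FieldI1 FieldI2)
    show "trans (osum r s)"
      unfolding trans_def
    proof (intro allI impI)
      fix x y z assume "(x, y) \<in> osum r s" "(y, z) \<in> osum r s"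
      then show "(x, z) \<in> osum r s"
        using rr(2) ss(2) by (cases x; cases y; cases z) (auto intro: FieldI1 FieldI2 dest: transD)
    qed
    show "antisym (osum r s)"
      unfolding antisym_def
    proof (intro allI impI)
      fix x y assume "(x, y) \<in> osum r s" "(y, x) \<in> osum r s"
      then show "x = y" using rr(3) ss(3) by (cases x; cases y) (auto dest: antisymD)
    qed
    show "total_on (Field (osum r s)) (osum r s)"
      unfolding total_on_def
    proof (intro ballI impI)
      fix x y assume "x \<in> Field (osum r s)" "y \<in> Field (osum r s)" "x \<noteq> y"
      then show "(x, y) \<in> osum r s \<or> (y, x) \<in> osum r s"
        using rr(4) ss(4) by (cases x; cases y) (auto simp: total_on_def Field_osum)
    qed
  qed
qed

lemma Well_order_osum:
  assumes r: "Well_order r" and s: "Well_order s"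
  shows "Well_order (osum r s)"
proof -
  have "Linear_order (osum r s)"
    using Linear_order_osum r s unfolding well_order_on_def by blast
  moreover have "\<exists>a\<in>A. \<forall>a'\<in>A. (a, a') \<in> osum r s"
    if A: "A \<subseteq> Field (osum r s)" "A \<noteq> {}" for A
  proof (cases "Inl -` A = {}")
    case False
    moreover have "Inl -` A \<subseteq> Field r" using A(1) by (auto simp: Field_osum)
    ultimately obtain a where a: "a \<in> Inl -` A" "\<forall>a'\<in>Inl -` A. (a, a') \<in> r"
      using r Linear_order_Well_order_iff[of r] unfolding well_order_on_def by blast
    have "(Inl a, x) \<in> osum r s" if "x \<in> A" for x
      using a A(1) that by (cases x) (auto simp: Field_osum subset_eq)
    then show ?thesis using a(1) by blast
  next
    case True
    obtain x where "x \<in> A" using A(2) by blast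
    with True have "Inr -` A \<noteq> {}" by (cases x) auto
    moreover have "Inr -` A \<subseteq> Field s" using A(1) by (auto simp: Field_osum)
    ultimately obtain a where a: "a \<in> Inr -` A" "\<forall>a'\<in>Inr -` A. (a, a') \<in> s"
      using s Linear_order_Well_order_iff[of s] unfolding well_order_on_def by blast
    have "(Inr a, x) \<in> osum r s" if "x \<in> A" for x
      using a True that by (cases x) auto
    then show ?thesis using a(1) by blast
  qed
  ultimately show ?thesis using Linear_order_Well_order_iff by blast
qed

lemma mem_nat_le [simp]: "(i, j) \<in> nat_le \<longleftrightarrow> i \<le> j"
  unfolding nat_le_def by simp

lemma Well_order_nat_le: "Well_order nat_le"
proof -
  have "Linear_order nat_le"
    unfolding order_on_defs Field_nat_le
    by (auto simp: refl_on_def trans_def antisym_def total_on_def intro: FieldI1 FieldI2)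
  moreover have "nat_le - Id = less_than" unfolding nat_le_def by auto
  ultimately show ?thesis unfolding well_order_on_def by simp
qed

lemma Well_order_plus_omega: "Well_order r \<Longrightarrow> Well_order (plus_omega r)"
  unfolding plus_omega_def by (rule Well_order_osum[OF _ Well_order_nat_le])

lemma plus_omega_simps [simp]:
  "(Inl a, Inl b) \<in> plus_omega r \<longleftrightarrow> (a, b) \<in> r"
  "(Inl a, Inr c) \<in> plus_omega r \<longleftrightarrow> a \<in> Field r"
  "(Inr c, Inl a) \<notin> plus_omega r"
  "(Inr c, Inr d) \<in> plus_omega r \<longleftrightarrow> c \<le> d"
  "lt (plus_omega r) (Inl a) (Inl b) \<longleftrightarrow> lt r a b"
  "lt (plus_omega r) (Inl a) (Inr c) \<longleftrightarrow> a \<in> Field r"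
  "\<not> lt (plus_omega r) (Inr c) (Inl a)"
  "lt (plus_omega r) (Inr c) (Inr d) \<longleftrightarrow> c < d"
  unfolding plus_omega_def by (auto simp: lt_def)

lemma lt_Field: "lt W x y \<Longrightarrow> x \<in> Field W" "lt W x y \<Longrightarrow> y \<in> Field W"
  unfolding lt_def by (auto intro: FieldI1 FieldI2)

context
  fixes W :: "'p rel"
  assumes W: "Well_order W"
begin

lemma le_refl: "x \<in> Field W \<Longrightarrow> (x, x) \<in> W"
  using W unfolding order_on_defs refl_on_def by blast

lemma lt_asym: "lt W x y \<Longrightarrow> (y, x) \<notin> W"
  using W unfolding order_on_defs lt_def antisym_def by blast

lemma lt_le_trans: "lt W x y \<Longrightarrow> (y, z) \<in> W \<Longrightarrow> lt W x z"
  using W lt_asym unfolding order_on_defs lt_def trans_def by blast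

lemma lt_trans: "lt W x y \<Longrightarrow> lt W y z \<Longrightarrow> lt W x z"
  using lt_le_trans unfolding lt_def by blast

lemma lt_total: "x \<in> Field W \<Longrightarrow> y \<in> Field W \<Longrightarrow> lt W x y \<or> x = y \<or> lt W y x"
  using W unfolding order_on_defs total_on_def lt_def by blast

lemma not_lt_iff_le: "x \<in> Field W \<Longrightarrow> y \<in> Field W \<Longrightarrow> \<not> lt W x y \<longleftrightarrow> (y, x) \<in> W"
  using lt_total lt_asym le_refl unfolding lt_def by blast

lemma exists_least: "A \<subseteq> Field W \<Longrightarrow> A \<noteq> {} \<Longrightarrow> \<exists>a\<in>A. \<forall>a'\<in>A. (a, a') \<in> W"
  using W Linear_order_Well_order_iff[of W] unfolding well_order_on_def by blast

lemma card_less_less: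
  assumes "y \<in> A" "lt W y y'" "finite {z\<in>A. lt W z y'}"
  shows "card {z\<in>A. lt W z y} < card {z\<in>A. lt W z y'}"
proof (rule psubset_card_mono[OF assms(3)])
  show "{z\<in>A. lt W z y} \<subset> {z\<in>A. lt W z y'}"
    using assms(1,2) lt_trans unfolding lt_def by blast
qed

lemma eq_if_card_less_eq:
  assumes "y \<in> A \<inter> Field W" "y' \<in> A \<inter> Field W"
    and "finite {z\<in>A. lt W z y}" "finite {z\<in>A. lt W z y'}"
    and "card {z\<in>A. lt W z y} = card {z\<in>A. lt W z y'}"
  shows "y = y'"
  using lt_total[of y y'] card_less_less[of y A y'] card_less_less[of y' A y] assms by auto

lemma ord_nth_eqI:
  assumes "y \<in> Field W" "finite {z. lt W z y}" "card {z. lt W z y} = m"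
  shows "ord_nth W m = y"
  unfolding ord_nth_def
proof (rule the_equality)
  fix y' assume "y' \<in> Field W \<and> finite {z. lt W z y'} \<and> card {z. lt W z y'} = m"
  then show "y' = y" using eq_if_card_less_eq[of y' UNIV y] assms by simp
qed (use assms in simp)

lemma ord_plus_eqI:
  assumes "y \<in> Field W" "(l, y) \<in> W"
    and "finite {z. (l, z) \<in> W \<and> lt W z y}" "card {z. (l, z) \<in> W \<and> lt W z y} = m"
  shows "ord_plus W l m = y"
  unfolding ord_plus_def
proof (rule the_equality)
  fix y' assume "y' \<in> Field W \<and> (l, y') \<in> W \<and> finite {z. (l, z) \<in> W \<and> lt W z y'}
      \<and> card {z. (l, z) \<in> W \<and> lt W z y'} = m"
  then show "y' = y" using eq_if_card_less_eq[of y' "{z. (l, z) \<in> W}" y] assms by simp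
qed (use assms in simp)

lemma ord_nth_exists:
  assumes ne: "Field W \<noteq> {}" and no_max: "\<forall>x\<in>Field W. \<exists>y. lt W x y"
  shows "\<exists>y\<in>Field W. finite {z. lt W z y} \<and> card {z. lt W z y} = m"
proof (induction m)
  case 0
  obtain a where a: "a \<in> Field W" "\<forall>a'\<in>Field W. (a, a') \<in> W"
    using exists_least[OF subset_refl ne] by blast
  have "\<not> lt W z a" for z
    using a(2) lt_asym[of z a] lt_Field(1)[of W z a] by blast
  then have "{z. lt W z a} = {}" by blast
  with a(1) show ?case by (intro bexI[of _ a]) simp_all
next
  case (Suc m)
  then obtain y where y: "y \<in> Field W" "finite {z. lt W z y}" "card {z. lt W z y} = m" by blast
  have "{z. lt W y z} \<subseteq> Field W" using lt_Field(2)[of W y] by blast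
  moreover have "{z. lt W y z} \<noteq> {}" using no_max y(1) by blast
  ultimately
  obtain y' where y': "lt W y y'" "\<forall>z. lt W y z \<longrightarrow> (y', z) \<in> W"
    using exists_least[of "{z. lt W y z}"] by auto
  have "{z. lt W z y'} = insert y {z. lt W z y}"
  proof (intro set_eqI iffI)
    fix z assume z: "z \<in> {z. lt W z y'}"
    then have "lt W z y'" by simp
    then have "lt W z y \<or> z = y \<or> lt W y z" using lt_total[OF lt_Field(1) y(1)] by blast
    moreover have "\<not> lt W y z" using y'(2) lt_asym[OF \<open>lt W z y'\<close>] by blast
    ultimately show "z \<in> insert y {z. lt W z y}" by blast
  next
    fix z assume "z \<in> insert y {z. lt W z y}"
    then show "z \<in> {z. lt W z y'}" using y'(1) lt_trans by blast
  qed
  moreover have "y \<notin> {z. lt W z y}" unfolding lt_def by simp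
  ultimately have "finite {z. lt W z y'} \<and> card {z. lt W z y'} = Suc m"
    using y(2,3) by simp
  moreover have "y' \<in> Field W" using lt_Field(2)[OF y'(1)] .
  ultimately show ?case by blast
qed

lemma ord_nth_props:
  assumes "Field W \<noteq> {}" "\<forall>x\<in>Field W. \<exists>y. lt W x y"
  shows "ord_nth W m \<in> Field W" "finite {z. lt W z (ord_nth W m)}"
    "card {z. lt W z (ord_nth W m)} = m"
  using ord_nth_exists[OF assms, of m] ord_nth_eqI by auto

lemma infinite_Field:
  assumes "Field W \<noteq> {}" "\<forall>x\<in>Field W. \<exists>y. lt W x y"
  shows "infinite (Field W)"
proof -
  have "inj (ord_nth W)"
    by (rule injI) (metis ord_nth_props(3)[OF assms])
  moreover have "range (ord_nth W) \<subseteq> Field W" using ord_nth_props(1)[OF assms] by blast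
  ultimately show ?thesis using finite_imageD infinite_UNIV_nat finite_subset by metis
qed

lemma finite_rank_or_limit_plus:
  assumes x: "x \<in> Field W"
  shows "finite {z. lt W z x} \<or> (\<exists>l m. is_limit_pt W l \<and> (l, x) \<in> W \<and> ord_plus W l m = x)"
proof -
  define seg where "seg l = {z. (l, z) \<in> W \<and> lt W z x}" for l
  define M where "M = {l. (l, x) \<in> W \<and> finite (seg l)}"
  have "seg x = {}" unfolding seg_def using lt_asym by blast
  then have "x \<in> M" unfolding M_def using le_refl[OF x] by simp
  moreover have "M \<subseteq> Field W" unfolding M_def by (auto intro: FieldI1)
  ultimately obtain l where l: "l \<in> M" "\<forall>l'\<in>M. (l, l') \<in> W"
    using exists_least[of M] by blast
  then have lx: "(l, x) \<in> W" and fin: "finite (seg l)" and lF: "l \<in> Field W"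
    unfolding M_def by (auto intro: FieldI1)
  show ?thesis
  proof (cases "\<exists>y. lt W y l")
    case False
    have "(l, z) \<in> W" if "lt W z x" for z
      using False not_lt_iff_le[OF lt_Field(1)[OF that] lF] by blast
    then have "{z. lt W z x} \<subseteq> seg l" unfolding seg_def by blast
    then show ?thesis using finite_subset[OF _ fin] by blast
  next
    case True
    have "is_limit_pt W l"
      unfolding is_limit_pt_def
    proof (intro conjI allI impI lF True)
      fix y assume y: "lt W y l"
      show "\<exists>z. lt W y z \<and> lt W z l"
      proof (rule ccontr)
        assume gap: "\<not> (\<exists>z. lt W y z \<and> lt W z l)"
        have "(l, z) \<in> W" if "lt W y z" "lt W z x" for z
          using gap that(1) not_lt_iff_le[OF lt_Field(1)[OF that(2)] lF] by blast
        then have "seg y \<subseteq> insert y (seg l)" unfolding seg_def lt_def by blast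
        then have "finite (seg y)" using finite_subset fin by blast
        moreover have "(y, x) \<in> W" using lt_le_trans[OF y lx] unfolding lt_def by blast
        ultimately have "y \<in> M" unfolding M_def by blast
        then show False using l(2) lt_asym[OF y] by blast
      qed
    qed
    moreover have "ord_plus W l (card (seg l)) = x"
      using ord_plus_eqI[OF x lx fin[unfolded seg_def]] by (simp add: seg_def)
    ultimately show ?thesis using lx by blast
  qed
qed

end

section \<open>Terms\<close>

lemma depends_only_const: "depends_only (\<lambda>_. c) Y"
  unfolding depends_only_def by (rule exI[of _ "{}"]) simp

lemma depends_only_var: "v \<in> Y \<Longrightarrow> depends_only (\<lambda>a. a v) Y"
  unfolding depends_only_def by (rule exI[of _ "{v}"]) simp

lemma depends_only_mono: "depends_only t Y \<Longrightarrow> Y \<subseteq> Z \<Longrightarrow> depends_only t Z"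
  unfolding depends_only_def by blast

lemma depends_only_imp_is_term: "depends_only t Y \<Longrightarrow> is_term t"
  unfolding depends_only_def is_term_def by blast

lemma subst_var [simp]: "subst (\<lambda>a. a v) \<psi> = \<psi> v"
  unfolding subst_def by simp

lemma depends_only_subst:
  assumes t: "depends_only t X" and \<psi>: "\<And>v. v \<in> X \<Longrightarrow> depends_only (\<psi> v) Y"
  shows "depends_only (subst t \<psi>) Y"
proof -
  obtain V where V: "finite V" "V \<subseteq> X" "\<forall>a b. (\<forall>v\<in>V. a v = b v) \<longrightarrow> t a = t b"
    using t unfolding depends_only_def by blast
  have "\<forall>v\<in>V. \<exists>U. finite U \<and> U \<subseteq> Y \<and> (\<forall>a b. (\<forall>u\<in>U. a u = b u) \<longrightarrow> \<psi> v a = \<psi> v b)"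
  proof
    fix v assume "v \<in> V"
    with V(2) have "depends_only (\<psi> v) Y" by (intro \<psi>) blast
    then show "\<exists>U. finite U \<and> U \<subseteq> Y \<and> (\<forall>a b. (\<forall>u\<in>U. a u = b u) \<longrightarrow> \<psi> v a = \<psi> v b)"
      unfolding depends_only_def .
  qed
  from bchoice[OF this] obtain U where U: "\<forall>v\<in>V. finite (U v) \<and> U v \<subseteq> Y \<and>
      (\<forall>a b. (\<forall>u\<in>U v. a u = b u) \<longrightarrow> \<psi> v a = \<psi> v b)"
    by blast
  show ?thesis
    unfolding depends_only_def
  proof (intro exI conjI allI impI)
    show "finite (\<Union>v\<in>V. U v)" "(\<Union>v\<in>V. U v) \<subseteq> Y" using V(1) U by auto
    fix a b :: assign assume "\<forall>u\<in>\<Union>v\<in>V. U v. a u = b u"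
    then have "\<forall>v\<in>V. \<psi> v a = \<psi> v b" using U by (metis UN_I)
    then show "subst t \<psi> a = subst t \<psi> b" unfolding subst_def using V(3) by simp
  qed
qed

definition determined_by :: "square \<Rightarrow> (nat \<times> nat) set \<Rightarrow> trm \<Rightarrow> bool" where
  "determined_by \<phi> S t \<longleftrightarrow> (\<forall>a b. (\<forall>(i, j)\<in>S. \<phi> i j a = \<phi> i j b) \<longrightarrow> t a = t b)"

lemma determined_by_mono: "determined_by \<phi> S t \<Longrightarrow> S \<subseteq> S' \<Longrightarrow> determined_by \<phi> S' t"
  unfolding determined_by_def by blast

lemma finitely_determined_family:
  assumes "finite I" "\<And>i. i \<in> I \<Longrightarrow> \<exists>S. finite S \<and> determined_by \<phi> S (s i)"
  shows "\<exists>S. finite S \<and> (\<forall>i\<in>I. determined_by \<phi> S (s i))"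
proof -
  have "\<forall>i\<in>I. \<exists>S. finite S \<and> determined_by \<phi> S (s i)" using assms(2) by blast
  from bchoice[OF this] obtain S where S: "\<forall>i\<in>I. finite (S i) \<and> determined_by \<phi> (S i) (s i)"
    by blast
  have "determined_by \<phi> (\<Union>i\<in>I. S i) (s i)" if "i \<in> I" for i
    using S that determined_by_mono[of \<phi> "S i" "s i"] by blast
  moreover have "finite (\<Union>i\<in>I. S i)" using S assms(1) by blast
  ultimately show ?thesis by blast
qed

lemma determined_by_sq_subst:
  "determined_by \<phi> S t \<Longrightarrow> determined_by (sq_subst \<phi> \<psi>) S (subst t (\<lambda>(i, j). \<psi> i j))"
  unfolding determined_by_def sq_subst_def subst_def by simp

lemma inQ_iff:
  "inQ t \<longleftrightarrow> (\<forall>n m. depends_only (t n m) {(i, j). tau i j \<le> tau n m}) \<and>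
     (\<forall>i j. \<exists>S. finite S \<and> determined_by t S (\<lambda>a. a (i, j)))"
  unfolding inQ_def determined_by_def by (auto dest: depends_only_imp_is_term)

lemma tau_eq_prod_encode: "tau n m = prod_encode (n, m)"
  by (simp add: tau_def prod_encode_def triangle_def)

lemma tau_prod_decode [simp]: "tau (fst (prod_decode t)) (snd (prod_decode t)) = t"
  by (simp add: tau_eq_prod_encode)

lemma tau_mono: "i \<le> n \<Longrightarrow> i + j \<le> n + m \<Longrightarrow> tau i j \<le> tau n m"
proof -
  assume "i \<le> n" "i + j \<le> n + m"
  then have "(i + j) * (i + j + 1) div 2 \<le> (n + m) * (n + m + 1) div 2"
    by (intro div_le_mono mult_le_mono) auto
  then show ?thesis using \<open>i \<le> n\<close> unfolding tau_def by simp
qed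

lemma less_tau_row_imp_less: "tau i j < tau n 0 \<Longrightarrow> i < n"
  using tau_mono[of n i 0 j] by (cases "i < n") auto

lemma le_tau_row: "n \<le> tau n 0"
  unfolding tau_def by simp

section \<open>The order \<open>\<omega>\<cdot>\<omega> + \<omega>\<close>\<close>

lemma Field_oo [simp]: "Field oo = UNIV"
  unfolding oo_def Field_def by auto

lemma Field_plus_omega_oo [simp]: "Field (plus_omega oo) = UNIV"
proof -
  have "x \<in> Inl ` UNIV \<union> range Inr" for x :: "(nat \<times> nat) + nat" by (cases x) auto
  then show ?thesis unfolding Field_plus_omega Field_oo by blast
qed

lemma mem_oo [simp]: "((a, b), (c, d)) \<in> oo \<longleftrightarrow> a < c \<or> (a = c \<and> b \<le> d)"
  unfolding oo_def by simp

lemma lt_oo [simp]: "lt oo (a, b) (c, d) \<longleftrightarrow> a < c \<or> (a = c \<and> b < d)"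
  unfolding lt_def by auto

lemma Well_order_oo: "Well_order oo"
proof -
  have "Linear_order oo"
    unfolding order_on_defs Field_oo by (auto simp: oo_def refl_on_def trans_def antisym_def total_on_def)
  moreover have "oo - Id = less_than <*lex*> less_than" unfolding oo_def by auto
  then have "wf (oo - Id)" by (simp add: wf_lex_prod)
  ultimately show ?thesis unfolding well_order_on_def by simp
qed

lemma nz_countable_limit_oo: "nz_countable_limit oo"
  unfolding nz_countable_limit_def
proof (intro conjI ballI)
  fix x :: "nat \<times> nat"
  show "\<exists>y. lt oo x y" by (cases x) (auto intro!: exI[of _ "(fst x, Suc (snd x))"])
qed (use Well_order_oo in simp_all)

lemma ord_nth_oo [simp]: "ord_nth oo m = (0, m)"
proof (rule ord_nth_eqI[OF Well_order_oo])
  have "{z. lt oo z (0, m)} = (\<lambda>j. (0, j)) ` {..<m}" by auto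
  then show "finite {z. lt oo z (0, m)}" "card {z. lt oo z (0, m)} = m"
    by (simp_all add: card_image inj_on_def)
qed simp

lemma limit_pt_plus_omega_oo:
  assumes "is_limit_pt (plus_omega oo) l"
  shows "l = Inr 0 \<or> (\<exists>a. l = Inl (Suc a, 0))"
proof -
  have no_gap: "\<exists>z. lt (plus_omega oo) y z \<and> lt (plus_omega oo) z l"
    if "lt (plus_omega oo) y l" for y
    using assms that unfolding is_limit_pt_def by blast
  have not_zero: "l \<noteq> Inl (0, 0)"
  proof
    assume "l = Inl (0, 0)"
    moreover obtain y where "lt (plus_omega oo) y l" using assms unfolding is_limit_pt_def by blast
    ultimately show False by (cases y) auto
  qed
  moreover have not_succ: "l \<noteq> Inl (a, Suc b)" for a b
  proof
    assume "l = Inl (a, Suc b)"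
    then obtain z where "lt (plus_omega oo) (Inl (a, b)) z" "lt (plus_omega oo) z (Inl (a, Suc b))"
      using no_gap[of "Inl (a, b)"] by auto
    then show False by (cases z) auto
  qed
  moreover have not_top_succ: "l \<noteq> Inr (Suc j)" for j
  proof
    assume "l = Inr (Suc j)"
    then obtain z where "lt (plus_omega oo) (Inr j) z" "lt (plus_omega oo) z (Inr (Suc j))"
      using no_gap[of "Inr j"] by auto
    then show False by (cases z) auto
  qed
  show ?thesis
  proof (cases l)
    case (Inl p)
    moreover obtain a b where "p = (a, b)" by fastforce
    ultimately show ?thesis using not_zero not_succ by (cases a; cases b) auto
  next
    case (Inr j)
    then show ?thesis using not_top_succ by (cases j) auto
  qed
qed

lemma ord_plus_plus_omega_oo_Inl [simp]: "ord_plus (plus_omega oo) (Inl (a, 0)) m = Inl (a, m)"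
proof (rule ord_plus_eqI[OF Well_order_plus_omega[OF Well_order_oo]])
  let ?S = "{z. (Inl (a, 0), z) \<in> plus_omega oo \<and> lt (plus_omega oo) z (Inl (a, m))}"
  have "?S = (\<lambda>j. Inl (a, j)) ` {..<m}"
  proof (intro set_eqI)
    fix z :: "(nat \<times> nat) + nat"
    show "z \<in> ?S \<longleftrightarrow> z \<in> (\<lambda>j. Inl (a, j)) ` {..<m}" by (cases z) auto
  qed
  then show "finite ?S" "card ?S = m" by (simp_all add: card_image inj_on_def)
qed simp_all

lemma ord_plus_plus_omega_oo_Inr [simp]: "ord_plus (plus_omega oo) (Inr 0) m = Inr m"
proof (rule ord_plus_eqI[OF Well_order_plus_omega[OF Well_order_oo]])
  let ?S = "{z. (Inr 0, z) \<in> plus_omega oo \<and> lt (plus_omega oo) z (Inr m)}"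
  have "?S = Inr ` {..<m}"
  proof (intro set_eqI)
    fix z :: "(nat \<times> nat) + nat"
    show "z \<in> ?S \<longleftrightarrow> z \<in> Inr ` {..<m}" by (cases z) auto
  qed
  then show "finite ?S" "card ?S = m" by (simp_all add: card_image)
qed simp_all

section \<open>Conditions in \<open>R\<close>\<close>

definition cofinal_seq :: "'p rel \<Rightarrow> 'p \<Rightarrow> (nat \<Rightarrow> 'p) \<Rightarrow> bool" where
  "cofinal_seq W l \<nu> \<longleftrightarrow> (\<forall>i. lt W (\<nu> i) l) \<and> (\<forall>i. lt W (\<nu> i) (\<nu> (Suc i))) \<and>
     (\<forall>b. lt W b l \<longrightarrow> (\<exists>i. (b, \<nu> i) \<in> W))"

definition block_fns :: "(nat \<Rightarrow> nat) \<Rightarrow> (nat \<Rightarrow> (nat \<Rightarrow> bool) \<Rightarrow> bool) \<Rightarrow> bool" where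
  "block_fns j f \<longleftrightarrow> strict_mono j \<and>
     (\<forall>k. (\<forall>\<eta> \<eta>'. (\<forall>i. j k \<le> i \<and> i \<le> j (Suc k) - 1 \<longrightarrow> \<eta> i = \<eta>' i) \<longrightarrow> f k \<eta> = f k \<eta>') \<and>
          (\<exists>\<eta>. f k \<eta>) \<and> (\<exists>\<eta>. \<not> f k \<eta>))"

lemma tilde_ok_iff:
  "tilde_ok W c \<longleftrightarrow> (\<forall>l. is_limit_pt W l \<longrightarrow>
     (\<forall>n m. cofinal_seq W l (nu c l n m) \<and> block_fns (jj c l n m) (ff c l n m)) \<and>
     (\<forall>n m1 m2. m1 \<noteq> m2 \<longrightarrow> range (nu c l n m1) \<inter> range (nu c l n m2) = {}))"
  unfolding tilde_ok_def cofinal_seq_def block_fns_def by (simp only: conj_assoc)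

lemma
  assumes "inR r p"
  shows inR_nz_countable_limit: "nz_countable_limit r"
    and inR_tilde_ok: "tilde_ok (plus_omega r) p"
    and inR_tm_Inr: "tm p n (Inr m) = (\<lambda>a. a (n, m))"
    and inR_depends_only: "\<alpha> \<in> Field r \<Longrightarrow> depends_only (tm p n (Inl \<alpha>)) {(l, k). l < n}"
    and inR_coherent: "is_limit_pt (plus_omega r) l \<Longrightarrow> \<exists>k0. \<forall>a k. k0 \<le> k \<longrightarrow>
          tm p n (ord_plus (plus_omega r) l m) a = gfun p l n m k (\<lambda>\<zeta>. tm p (Suc n) \<zeta> a)"
  using assms unfolding inR_def by simp_all

lemma lt_osum_Inl_eq_image: "{z. lt (osum r s) z (Inl x)} = Inl ` {z. lt r z x}"
proof (intro set_eqI)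
  fix z show "z \<in> {z. lt (osum r s) z (Inl x)} \<longleftrightarrow> z \<in> Inl ` {z. lt r z x}"
    by (cases z) auto
qed

lemma inR_Well_order:
  assumes "inR r p"
  shows "Well_order r" "Field r \<noteq> {}" "\<forall>x\<in>Field r. \<exists>y. lt r x y"
  using inR_nz_countable_limit[OF assms] unfolding nz_countable_limit_def by blast+

lemma inR_tm_finitely_determined_finite_rank:
  assumes R: "inR r p" and \<alpha>: "\<alpha> \<in> Field (plus_omega r)"
    and fin: "finite {z. lt (plus_omega r) z \<alpha>}"
  shows "\<exists>S. finite S \<and> determined_by (sigma r p) S (tm p n \<alpha>)"
proof (cases \<alpha>)
  case (Inl x)
  have Wr: "Well_order r" using inR_Well_order[OF R] by blast
  have "finite {z. lt r z x}"
    using fin unfolding Inl plus_omega_def lt_osum_Inl_eq_image by (simp add: finite_image_iff)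
  moreover have "x \<in> Field r" using \<alpha> unfolding Inl Field_plus_omega by auto
  ultimately have "ord_nth r (card {z. lt r z x}) = x" using ord_nth_eqI[OF Wr] by blast
  then have "tm p n \<alpha> = sigma r p n (card {z. lt r z x})" unfolding sigma_def Inl by simp
  then have "determined_by (sigma r p) {(n, card {z. lt r z x})} (tm p n \<alpha>)"
    unfolding determined_by_def by simp
  then show ?thesis by blast
next
  case (Inr c)
  have "Inl ` Field r \<subseteq> {z. lt (plus_omega r) z \<alpha>}" unfolding Inr by auto
  then have "finite (Inl ` Field r :: ('a + nat) set)" using fin finite_subset by blast
  then have "finite (Field r)" by (simp add: finite_image_iff)
  then show ?thesis using infinite_Field inR_Well_order[OF R] by blast
qed

text \<open>Coherence: the term at \<open>\<lambda> + m\<close> is a function of finitely many terms of the ladder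
  to \<open>\<lambda>\<close> in the next row.\<close>

lemma inR_tm_finitely_determined_limit_plus:
  assumes R: "inR r p" and lim: "is_limit_pt (plus_omega r) l"
    and ladder: "\<And>i. \<exists>S. finite S \<and> determined_by (sigma r p) S (tm p (Suc n) (nu p l n m i))"
  shows "\<exists>S. finite S \<and> determined_by (sigma r p) S (tm p n (ord_plus (plus_omega r) l m))"
proof -
  let ?t = "tm p n (ord_plus (plus_omega r) l m)"
  let ?\<eta> = "\<lambda>a i. tm p (Suc n) (nu p l n m i) a" and ?j = "jj p l n m" and ?f = "ff p l n m"
  obtain k where k: "\<forall>a. ?t a = ?f k (?\<eta> a)"
    using inR_coherent[OF R lim, of n m] unfolding gfun_def by auto
  have blocks: "block_fns ?j ?f"
    using inR_tilde_ok[OF R] lim unfolding tilde_ok_iff by blast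
  define I where "I = {i. ?j k \<le> i \<and> i \<le> ?j (Suc k) - 1}"
  have "finite I" unfolding I_def by (rule finite_subset[of _ "{..?j (Suc k) - 1}"]) auto
  then obtain S where S: "finite S" "\<forall>i\<in>I. determined_by (sigma r p) S (tm p (Suc n) (nu p l n m i))"
    using finitely_determined_family[of I "sigma r p" "\<lambda>i. tm p (Suc n) (nu p l n m i)"] ladder
    by auto
  have "determined_by (sigma r p) S ?t"
    unfolding determined_by_def
  proof (intro allI impI)
    fix a b assume agree: "\<forall>(i, j)\<in>S. sigma r p i j a = sigma r p i j b"
    have "?\<eta> a i = ?\<eta> b i" if "i \<in> I" for i
      using S(2) that agree unfolding determined_by_def by blast
    moreover have "?f k \<eta> = ?f k \<eta>'" if "\<forall>i\<in>I. \<eta> i = \<eta>' i" for \<eta> \<eta>'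
      using blocks that unfolding block_fns_def I_def by simp
    ultimately show "?t a = ?t b" using k by simp
  qed
  then show ?thesis using S(1) by blast
qed

lemma inR_tm_finitely_determined:
  assumes R: "inR r p" and \<alpha>: "\<alpha> \<in> Field (plus_omega r)"
  shows "\<exists>S. finite S \<and> determined_by (sigma r p) S (tm p n \<alpha>)"
proof -
  let ?W = "plus_omega r"
  have W: "Well_order ?W" using Well_order_plus_omega inR_Well_order[OF R] by blast
  then have "wf (?W - Id)" unfolding well_order_on_def by blast
  then show ?thesis using \<alpha>
  proof (induction \<alpha> arbitrary: n rule: wf_induct_rule)
    case (less \<alpha>)
    from finite_rank_or_limit_plus[OF W less.prems] show ?case
    proof (elim disjE exE conjE)
      assume "finite {z. lt ?W z \<alpha>}"
      then show ?case by (rule inR_tm_finitely_determined_finite_rank[OF R less.prems])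
    next
      fix l m assume lim: "is_limit_pt ?W l" and "(l, \<alpha>) \<in> ?W" and \<alpha>_eq: "ord_plus ?W l m = \<alpha>"
      have "\<exists>S. finite S \<and> determined_by (sigma r p) S (tm p (Suc n) (nu p l n m i))" for i
      proof (rule less.IH)
        have "lt ?W (nu p l n m i) l"
          using inR_tilde_ok[OF R] lim unfolding tilde_ok_iff cofinal_seq_def by blast
        then have below: "lt ?W (nu p l n m i) \<alpha>" using lt_le_trans[OF W _ \<open>(l, \<alpha>) \<in> ?W\<close>] by simp
        then show "(nu p l n m i, \<alpha>) \<in> ?W - Id" unfolding lt_def by simp
        show "nu p l n m i \<in> Field ?W" using lt_Field(1)[OF below] .
      qed
      then show ?case
        using inR_tm_finitely_determined_limit_plus[OF R lim] \<alpha>_eq by blast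
    qed
  qed
qed

lemma ord_nth_osum:
  assumes "Well_order r" "Well_order s" "Field r \<noteq> {}" "\<forall>x\<in>Field r. \<exists>y. lt r x y"
  shows "ord_nth (osum r s) m = Inl (ord_nth r m)"
proof (rule ord_nth_eqI[OF Well_order_osum[OF assms(1,2)]])
  show "Inl (ord_nth r m) \<in> Field (osum r s)"
    using ord_nth_props(1)[OF assms(1,3,4)] unfolding Field_osum by blast
  show "finite {z. lt (osum r s) z (Inl (ord_nth r m))}"
    "card {z. lt (osum r s) z (Inl (ord_nth r m))} = m"
    unfolding lt_osum_Inl_eq_image using ord_nth_props(2,3)[OF assms(1,3,4)]
    by (simp_all add: card_image)
qed

lemma sigma_stack:
  assumes "inR r p" "Well_order s"
  shows "sigma (osum r s) (stack r s p q) = sq_subst (sigma r p) (sigma s q)"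
  using ord_nth_osum[OF inR_Well_order(1)[OF assms(1)] assms(2) inR_Well_order(2,3)[OF assms(1)]]
  unfolding sigma_def sq_subst_def stack_def Let_def by simp

section \<open>A universal element of \<open>Q\<^sub>*\<close>\<close>

text \<open>Row \<open>n\<close> lists, periodically in the second coordinate of the column, the variables
  \<open>x\<^sub>v\<close> with \<open>tau v < tau n 0\<close>, each period closed by the constant \<open>False\<close>.\<close>

definition enum_sq :: square where
  "enum_sq n b = (let c = snd (prod_decode b) mod Suc (tau n 0) in
     if c < tau n 0 then (\<lambda>a. a (prod_decode c)) else (\<lambda>_. False))"

lemma depends_only_enum_sq: "depends_only (enum_sq n b) {(i, j). tau i j < tau n 0}"
proof -
  have "prod_decode c \<in> {(i, j). tau i j < tau n 0}" if "c < tau n 0" for c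
    using that tau_prod_decode[of c] by (auto simp: case_prod_beta)
  then show ?thesis
    unfolding enum_sq_def Let_def by (simp add: depends_only_var depends_only_const)
qed

lemma enum_sq_var: "enum_sq (Suc (tau i j)) (prod_encode (0, tau i j)) = (\<lambda>a. a (i, j))"
proof -
  have "tau i j < tau (Suc (tau i j)) 0" using le_tau_row[of "Suc (tau i j)"] by simp
  then show ?thesis unfolding enum_sq_def by (simp add: tau_eq_prod_encode)
qed

lemma inQ_enum_sq: "inQ enum_sq"
  unfolding inQ_iff
proof (intro conjI allI)
  fix n m
  have "{(i, j). tau i j < tau n 0} \<subseteq> {(i, j). tau i j \<le> tau n m}"
    using tau_mono[of n n 0 m] by auto
  then show "depends_only (enum_sq n m) {(i, j). tau i j \<le> tau n m}"
    using depends_only_enum_sq depends_only_mono by blast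
next
  fix i j
  show "\<exists>S. finite S \<and> determined_by enum_sq S (\<lambda>a. a (i, j))"
    by (intro exI[of _ "{(Suc (tau i j), prod_encode (0, tau i j))}"])
      (simp add: determined_by_def enum_sq_var)
qed

text \<open>Every variable occurs in \<open>enum_sq\<close>, and every variable is a term of a condition
  \<open>p \<in> R\<close>, hence finitely determined by \<open>\<sigma>(p)\<close>.\<close>

lemma inQ_sq_subst_enum_sq:
  assumes R: "inR r p"
  shows "inQ (sq_subst (sigma r p) enum_sq)"
  unfolding inQ_iff
proof (intro conjI allI)
  fix n m
  have "ord_nth r m \<in> Field r"
    using ord_nth_props(1)[OF inR_Well_order[OF R]] .
  then have "depends_only (sigma r p n m) {(l, k). l < n}"
    unfolding sigma_def by (rule inR_depends_only[OF R])
  moreover have "depends_only (enum_sq l k) {(i, j). tau i j \<le> tau n m}" if "l < n" for l k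
  proof (rule depends_only_mono[OF depends_only_enum_sq])
    have "tau l 0 \<le> tau n m" using that tau_mono[of l n 0 m] by simp
    then show "{(i, j). tau i j < tau l 0} \<subseteq> {(i, j). tau i j \<le> tau n m}" by auto
  qed
  ultimately show "depends_only (sq_subst (sigma r p) enum_sq n m) {(i, j). tau i j \<le> tau n m}"
    unfolding sq_subst_def by (auto intro: depends_only_subst)
next
  fix i j
  let ?v = "(Suc (tau i j), prod_encode (0, tau i j))"
  obtain S where "finite S" "determined_by (sigma r p) S (tm p (fst ?v) (Inr (snd ?v)))"
    using inR_tm_finitely_determined[OF R, of "Inr (snd ?v)"] unfolding Field_plus_omega by blast
  then have "determined_by (sigma r p) S (\<lambda>a. a ?v)" by (simp add: inR_tm_Inr[OF R])
  then have "determined_by (sq_subst (sigma r p) enum_sq) S (subst (\<lambda>a. a ?v) (\<lambda>(i, j). enum_sq i j))"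
    by (rule determined_by_sq_subst)
  then have "determined_by (sq_subst (sigma r p) enum_sq) S (\<lambda>a. a (i, j))"
    by (simp add: enum_sq_var)
  then show "\<exists>S. finite S \<and> determined_by (sq_subst (sigma r p) enum_sq) S (\<lambda>a. a (i, j))"
    using \<open>finite S\<close> by blast
qed

section \<open>The condition realising \<open>enum_sq \<circ> \<phi>\<close>\<close>

definition vals_below :: "square \<Rightarrow> nat \<Rightarrow> assign \<Rightarrow> nat \<Rightarrow> bool" where
  "vals_below \<phi> N a t \<longleftrightarrow> t < tau N 0 \<and> (case prod_decode t of (i, j) \<Rightarrow> \<phi> i j a)"

lemma vals_below_eq_imp_agree:
  assumes "vals_below \<phi> N a = vals_below \<phi> N b" "tau i j < tau N 0"
  shows "\<phi> i j a = \<phi> i j b"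
  using fun_cong[OF assms(1), of "tau i j"] assms(2)
  by (simp add: vals_below_def tau_eq_prod_encode)

lemma sq_subst_enum_sq_apply:
  "sq_subst enum_sq \<phi> n (prod_encode (m, i)) a = vals_below \<phi> n a (i mod Suc (tau n 0))"
  unfolding sq_subst_def enum_sq_def vals_below_def Let_def by (simp add: subst_def case_prod_beta)

definition recoverable :: "square \<Rightarrow> nat \<times> nat \<Rightarrow> nat \<Rightarrow> bool" where
  "recoverable \<phi> v N \<longleftrightarrow> determined_by \<phi> {(i, j). tau i j < tau N 0} (\<lambda>a. a v)"

lemma inQ_eventually_recoverable:
  assumes "inQ \<phi>"
  shows "\<exists>K. \<forall>N\<ge>K. recoverable \<phi> v N"
proof -
  obtain S where S: "finite S" "determined_by \<phi> S (\<lambda>a. a v)"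
    using assms unfolding inQ_iff by (cases v) blast
  define K where "K = Suc (Max (insert 0 ((\<lambda>(i, j). tau i j) ` S)))"
  have "S \<subseteq> {(i, j). tau i j < tau N 0}" if "K \<le> N" for N
  proof clarify
    fix i j assume "(i, j) \<in> S"
    then have "tau i j \<le> Max (insert 0 ((\<lambda>(i, j). tau i j) ` S))"
      using S(1) by (intro Max_ge) force+
    then have "tau i j < K" unfolding K_def by simp
    then show "tau i j < tau N 0" using that le_tau_row[of N] by linarith
  qed
  then show ?thesis
    unfolding recoverable_def using S(2) determined_by_mono by blast
qed

text \<open>The column \<open>b\<close> codes a variable \<open>x\<^sub>v\<close>; the term is \<open>x\<^sub>v\<close> once \<open>x\<^sub>v\<close> is a function
  of the entries of \<open>\<phi>\<close> coded below \<open>tau (n + a) 0\<close>, and \<open>False\<close> before.\<close>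

definition recover_tm :: "square \<Rightarrow> nat \<Rightarrow> nat \<Rightarrow> nat \<Rightarrow> trm" where
  "recover_tm \<phi> n a b = (let v = prod_decode (fst (prod_decode b)) in
     if fst v < n \<and> recoverable \<phi> v (n + a) then (\<lambda>as. as v) else (\<lambda>_. False))"

lemma depends_only_recover_tm: "depends_only (recover_tm \<phi> n a b) {(l, k). l < n}"
  unfolding recover_tm_def Let_def
  by (auto simp: case_prod_beta intro: depends_only_var depends_only_const)

lemma recover_tm_determined:
  "determined_by \<phi> {(i, j). tau i j < tau (n + a) 0} (recover_tm \<phi> n a b)"
  unfolding recover_tm_def Let_def recoverable_def by (simp add: determined_by_def)

definition recover_fn :: "square \<Rightarrow> nat \<Rightarrow> nat \<Rightarrow> (nat \<Rightarrow> bool) \<Rightarrow> bool" where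
  "recover_fn \<phi> n m w = recover_tm \<phi> n 1 m (SOME a. vals_below \<phi> (Suc n) a = w)"

lemma recover_fn_vals_below:
  "recover_fn \<phi> n m (vals_below \<phi> (Suc n) a) = recover_tm \<phi> n 1 m a"
proof -
  define a' where "a' = (SOME a'. vals_below \<phi> (Suc n) a' = vals_below \<phi> (Suc n) a)"
  have "vals_below \<phi> (Suc n) a' = vals_below \<phi> (Suc n) a"
    unfolding a'_def by (rule someI[of _ a]) (rule refl)
  then have "\<forall>(i, j)\<in>{(i, j). tau i j < tau (n + 1) 0}. \<phi> i j a' = \<phi> i j a"
    using vals_below_eq_imp_agree by auto
  then show ?thesis
    using recover_tm_determined[of \<phi> n 1 m]
    unfolding recover_fn_def a'_def[symmetric] determined_by_def by blast
qed

definition next_code :: "nat \<Rightarrow> nat \<Rightarrow> nat" where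
  "next_code n m = (if fst (prod_decode (fst (prod_decode m))) < n then fst (prod_decode m)
     else prod_encode (Suc n, 0))"

text \<open>Positions: \<open>Inl (a, b)\<close> is \<open>\<omega>\<cdot>a + b\<close> and \<open>Inr m\<close> is \<open>\<omega>\<cdot>\<omega> + m\<close>. Block 0 carries
  \<open>enum_sq \<circ> \<phi>\<close>; the ladders at \<open>\<omega>\<cdot>(a + 2)\<close> and \<open>\<omega>\<cdot>\<omega>\<close> copy single terms of the next
  row, while at \<open>\<omega>\<close> each block of the ladder reads one period of \<open>enum_sq\<close>, whose final
  \<open>False\<close> makes the block function surjective.\<close>

definition univ_cond :: "square \<Rightarrow> ((nat \<times> nat) + nat) cond" where
  "univ_cond \<phi> = \<lparr>
     nu = (\<lambda>l n m i. case l of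
        Inl (a, _) \<Rightarrow> (if a = 1 then Inl (0, prod_encode (m, i))
                      else Inl (a - 1, prod_encode (next_code n m, prod_encode (m, i))))
      | Inr _ \<Rightarrow> Inl (i, prod_encode (prod_encode (n, m), 0))),
     jj = (\<lambda>l n m. if l = Inl (1, 0) then (\<lambda>k. k * Suc (tau (Suc n) 0)) else id),
     ff = (\<lambda>l n m k \<eta>. if l = Inl (1, 0)
        then recover_fn \<phi> n m (\<lambda>t. t < tau (Suc n) 0 \<and> \<eta> (k * Suc (tau (Suc n) 0) + t))
               \<noteq> \<eta> (k * Suc (tau (Suc n) 0) + tau (Suc n) 0)
        else \<eta> k),
     tm = (\<lambda>n x. case x of
        Inl (a, b) \<Rightarrow> (if a = 0 then sq_subst enum_sq \<phi> n b else recover_tm \<phi> n a b)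
      | Inr m \<Rightarrow> (\<lambda>as. as (n, m))) \<rparr>"

lemma univ_cond_tm [simp]:
  "tm (univ_cond \<phi>) n (Inl (0, b)) = sq_subst enum_sq \<phi> n b"
  "tm (univ_cond \<phi>) n (Inl (Suc a, b)) = recover_tm \<phi> n (Suc a) b"
  "tm (univ_cond \<phi>) n (Inr m) = (\<lambda>as. as (n, m))"
  unfolding univ_cond_def by simp_all

lemma univ_cond_omega [simp]:
  "nu (univ_cond \<phi>) (Inl (Suc 0, 0)) n m = (\<lambda>i. Inl (0, prod_encode (m, i)))"
  "jj (univ_cond \<phi>) (Inl (Suc 0, 0)) n m = (\<lambda>k. k * Suc (tau (Suc n) 0))"
  "ff (univ_cond \<phi>) (Inl (Suc 0, 0)) n m = (\<lambda>k \<eta>.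
     recover_fn \<phi> n m (\<lambda>t. t < tau (Suc n) 0 \<and> \<eta> (k * Suc (tau (Suc n) 0) + t))
       \<noteq> \<eta> (k * Suc (tau (Suc n) 0) + tau (Suc n) 0))"
  unfolding univ_cond_def by simp_all

lemma univ_cond_omega_mult [simp]:
  "nu (univ_cond \<phi>) (Inl (Suc (Suc a), 0)) n m
     = (\<lambda>i. Inl (Suc a, prod_encode (next_code n m, prod_encode (m, i))))"
  "jj (univ_cond \<phi>) (Inl (Suc (Suc a), 0)) n m = id"
  "ff (univ_cond \<phi>) (Inl (Suc (Suc a), 0)) n m = (\<lambda>k \<eta>. \<eta> k)"
  unfolding univ_cond_def by simp_all

lemma univ_cond_omega_omega [simp]:
  "nu (univ_cond \<phi>) (Inr 0) n m = (\<lambda>i. Inl (i, prod_encode (prod_encode (n, m), 0)))"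
  "jj (univ_cond \<phi>) (Inr 0) n m = id"
  "ff (univ_cond \<phi>) (Inr 0) n m = (\<lambda>k \<eta>. \<eta> k)"
  unfolding univ_cond_def by simp_all

lemma sigma_univ_cond: "sigma oo (univ_cond \<phi>) = sq_subst enum_sq \<phi>"
  unfolding sigma_def by simp

lemma strict_mono_prod_encode_snd: "strict_mono (\<lambda>i. prod_encode (m, i))"
  by (rule strict_mono_Suc_iff[THEN iffD2]) (simp add: prod_encode_def)

lemma cofinal_seq_omega_mult:
  assumes "strict_mono g"
  shows "cofinal_seq (plus_omega oo) (Inl (Suc a, 0)) (\<lambda>i. Inl (a, g i))"
  unfolding cofinal_seq_def
proof (intro conjI allI impI)
  show "lt (plus_omega oo) (Inl (a, g i)) (Inl (Suc a, 0))" for i by simp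
  show "lt (plus_omega oo) (Inl (a, g i)) (Inl (a, g (Suc i)))" for i
    using assms by (simp add: strict_mono_Suc_iff)
  fix b assume b: "lt (plus_omega oo) b (Inl (Suc a, 0))"
  then obtain c d where "b = Inl (c, d)" "c \<le> a" by (cases b) auto
  moreover have "d \<le> g d" using strict_mono_imp_increasing[OF assms] .
  ultimately show "\<exists>i. (b, Inl (a, g i)) \<in> plus_omega oo" by (intro exI[of _ d]) auto
qed

lemma cofinal_seq_omega_omega: "cofinal_seq (plus_omega oo) (Inr 0) (\<lambda>i. Inl (i, c))"
  unfolding cofinal_seq_def
proof (intro conjI allI impI)
  fix b assume "lt (plus_omega oo) b (Inr 0)"
  then obtain x y where "b = Inl (x, y)" by (cases b) auto
  then show "\<exists>i. (b, Inl (i, c)) \<in> plus_omega oo" by (intro exI[of _ "Suc x"]) simp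
qed simp_all

lemma block_fns_id: "block_fns id (\<lambda>k \<eta>. \<eta> k)"
  unfolding block_fns_def by (auto simp: strict_mono_def)

lemma block_fns_xor_last:
  "block_fns (\<lambda>k. k * Suc T) (\<lambda>k \<eta>. F (\<lambda>t. t < T \<and> \<eta> (k * Suc T + t)) \<noteq> \<eta> (k * Suc T + T))"
  unfolding block_fns_def
proof (intro conjI allI impI)
  show "strict_mono (\<lambda>k. k * Suc T)" by (rule strict_mono_Suc_iff[THEN iffD2]) simp
  fix k
  let ?f = "\<lambda>\<eta>. F (\<lambda>t. t < T \<and> \<eta> (k * Suc T + t)) \<noteq> \<eta> (k * Suc T + T)"
  fix \<eta> \<eta>' :: "nat \<Rightarrow> bool"
  assume "\<forall>i. k * Suc T \<le> i \<and> i \<le> Suc k * Suc T - 1 \<longrightarrow> \<eta> i = \<eta>' i"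
  then have agree: "\<eta> (k * Suc T + t) = \<eta>' (k * Suc T + t)" if "t \<le> T" for t
    using that by simp
  then have "(\<lambda>t. t < T \<and> \<eta> (k * Suc T + t)) = (\<lambda>t. t < T \<and> \<eta>' (k * Suc T + t))"
    by (auto simp: fun_eq_iff)
  then show "?f \<eta> = ?f \<eta>'" using agree[of T] by simp
next
  fix k
  define \<eta>0 :: "nat \<Rightarrow> bool" where "\<eta>0 = (\<lambda>_. False)"
  let ?f = "\<lambda>\<eta>. F (\<lambda>t. t < T \<and> \<eta> (k * Suc T + t)) \<noteq> \<eta> (k * Suc T + T)"
  have "?f \<eta>0 \<noteq> ?f (\<eta>0(k * Suc T + T := True))" unfolding \<eta>0_def by simp
  then show "\<exists>\<eta>. ?f \<eta>" "\<exists>\<eta>. \<not> ?f \<eta>" by blast+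
qed

lemma tilde_ok_univ_cond: "tilde_ok (plus_omega oo) (univ_cond \<phi>)"
  unfolding tilde_ok_iff
proof (intro allI impI)
  fix l assume "is_limit_pt (plus_omega oo) l"
  then consider "l = Inr 0" | "l = Inl (Suc 0, 0)" | a where "l = Inl (Suc (Suc a), 0)"
    using limit_pt_plus_omega_oo not0_implies_Suc by blast
  then show "(\<forall>n m. cofinal_seq (plus_omega oo) l (nu (univ_cond \<phi>) l n m) \<and>
      block_fns (jj (univ_cond \<phi>) l n m) (ff (univ_cond \<phi>) l n m)) \<and>
    (\<forall>n m1 m2. m1 \<noteq> m2 \<longrightarrow>
      range (nu (univ_cond \<phi>) l n m1) \<inter> range (nu (univ_cond \<phi>) l n m2) = {})"
  proof cases
    case 1
    then show ?thesis using cofinal_seq_omega_omega block_fns_id by auto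
  next
    case 2
    then show ?thesis
      using cofinal_seq_omega_mult[OF strict_mono_prod_encode_snd] block_fns_xor_last by auto
  next
    case 3
    have "strict_mono (\<lambda>i. prod_encode (c, prod_encode (m, i)))" for c m
      using strict_mono_prod_encode_snd unfolding strict_mono_def by blast
    then show ?thesis using 3 cofinal_seq_omega_mult block_fns_id by auto
  qed
qed

lemma univ_cond_coherent_omega:
  "tm (univ_cond \<phi>) n (ord_plus (plus_omega oo) (Inl (Suc 0, 0)) m) a
     = gfun (univ_cond \<phi>) (Inl (Suc 0, 0)) n m k (\<lambda>\<zeta>. tm (univ_cond \<phi>) (Suc n) \<zeta> a)"
proof -
  let ?T = "tau (Suc n) 0"
  let ?\<eta> = "\<lambda>i. tm (univ_cond \<phi>) (Suc n) (Inl (0, prod_encode (m, i))) a"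
  have "(k * Suc ?T + t) mod Suc ?T = t" if "t \<le> ?T" for t
    using that mod_mult_self3[of k "Suc ?T" t] by simp
  then have \<eta>: "?\<eta> (k * Suc ?T + t) = vals_below \<phi> (Suc n) a t" if "t \<le> ?T" for t
    unfolding univ_cond_tm(1) sq_subst_enum_sq_apply using that by presburger
  then have "(\<lambda>t. t < ?T \<and> ?\<eta> (k * Suc ?T + t)) = vals_below \<phi> (Suc n) a"
    by (auto simp: fun_eq_iff vals_below_def)
  moreover have "\<not> ?\<eta> (k * Suc ?T + ?T)" using \<eta>[of ?T] by (simp add: vals_below_def)
  ultimately show ?thesis by (simp add: gfun_def recover_fn_vals_below)
qed

lemma univ_cond_coherent_omega_mult:
  "tm (univ_cond \<phi>) n (ord_plus (plus_omega oo) (Inl (Suc (Suc b), 0)) m) a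
     = gfun (univ_cond \<phi>) (Inl (Suc (Suc b), 0)) n m k (\<lambda>\<zeta>. tm (univ_cond \<phi>) (Suc n) \<zeta> a)"
  by (auto simp: gfun_def recover_tm_def next_code_def Let_def)

lemma univ_cond_coherent_omega_omega:
  assumes "inQ \<phi>"
  shows "\<exists>k0. \<forall>a k. k0 \<le> k \<longrightarrow> tm (univ_cond \<phi>) n (ord_plus (plus_omega oo) (Inr 0) m) a
     = gfun (univ_cond \<phi>) (Inr 0) n m k (\<lambda>\<zeta>. tm (univ_cond \<phi>) (Suc n) \<zeta> a)"
proof -
  obtain K where K: "\<forall>N\<ge>K. recoverable \<phi> (n, m) N"
    using inQ_eventually_recoverable[OF assms] by blast
  show ?thesis
  proof (intro exI[of _ "Suc K"] allI impI)
    fix a k assume "Suc K \<le> k"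
    then obtain k' where "k = Suc k'" "recoverable \<phi> (n, m) (Suc n + Suc k')"
      using K by (cases k) auto
    then show "tm (univ_cond \<phi>) n (ord_plus (plus_omega oo) (Inr 0) m) a
       = gfun (univ_cond \<phi>) (Inr 0) n m k (\<lambda>\<zeta>. tm (univ_cond \<phi>) (Suc n) \<zeta> a)"
      by (simp add: gfun_def recover_tm_def)
  qed
qed

lemma depends_only_univ_cond_tm:
  assumes "inQ \<phi>"
  shows "depends_only (tm (univ_cond \<phi>) n (Inl (a, b))) {(l, k). l < n}"
proof (cases a)
  case 0
  have "depends_only (\<phi> i j) {(l, k). l < n}" if "tau i j < tau n 0" for i j
  proof (rule depends_only_mono)
    show "depends_only (\<phi> i j) {(i', j'). tau i' j' \<le> tau i j}"
      using assms unfolding inQ_iff by blast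
    show "{(i', j'). tau i' j' \<le> tau i j} \<subseteq> {(l, k). l < n}"
    proof clarify
      fix i' j' assume "tau i' j' \<le> tau i j"
      then show "i' < n" using that less_tau_row_imp_less[of i' j' n] by simp
    qed
  qed
  then have "depends_only (sq_subst enum_sq \<phi> n b) {(l, k). l < n}"
    unfolding sq_subst_def by (auto intro: depends_only_subst[OF depends_only_enum_sq])
  then show ?thesis using 0 by simp
next
  case (Suc a')
  then show ?thesis using depends_only_recover_tm by simp
qed

lemma inR_univ_cond:
  assumes \<phi>: "inQ \<phi>"
  shows "inR oo (univ_cond \<phi>)"
  unfolding inR_def
proof (intro conjI allI impI)
  fix n
  show "is_term (tm (univ_cond \<phi>) n \<alpha>)" for \<alpha>
  proof (cases \<alpha>)
    case (Inl p)
    then show ?thesis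
      using depends_only_univ_cond_tm[OF \<phi>] depends_only_imp_is_term by (cases p) blast
  next
    case (Inr m)
    then show ?thesis
      using depends_only_imp_is_term[OF depends_only_var[of "(n, m)" UNIV]] by simp
  qed
  show "depends_only (tm (univ_cond \<phi>) n (Inl \<alpha>)) {(l, k). l < n}" for \<alpha>
    using depends_only_univ_cond_tm[OF \<phi>] by (cases \<alpha>) blast
  fix m l assume "is_limit_pt (plus_omega oo) l"
  then consider "l = Inr 0" | "l = Inl (Suc 0, 0)" | b where "l = Inl (Suc (Suc b), 0)"
    using limit_pt_plus_omega_oo not0_implies_Suc by blast
  then show "\<exists>k0. \<forall>a k. k0 \<le> k \<longrightarrow> tm (univ_cond \<phi>) n (ord_plus (plus_omega oo) l m) a
      = gfun (univ_cond \<phi>) l n m k (\<lambda>\<zeta>. tm (univ_cond \<phi>) (Suc n) \<zeta> a)"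
    by cases (use univ_cond_coherent_omega_omega[OF \<phi>] univ_cond_coherent_omega
        univ_cond_coherent_omega_mult in blast)+
qed (simp_all add: nz_countable_limit_oo tilde_ok_univ_cond)

definition id_sq :: square where
  "id_sq i j a = a (i, j)"

lemma sq_subst_id_sq: "sq_subst t id_sq = t"
  unfolding sq_subst_def subst_def id_sq_def by (simp add: case_prod_beta)

lemma inQ_id_sq: "inQ id_sq"
  unfolding inQ_iff id_sq_def
  by (auto intro: depends_only_var exI[of _ "{(_, _)}"] simp: determined_by_def)

theorem mainTheorem15:
  shows "(\<exists>rD. inR oo rD \<and> inQ (sigma oo rD) \<and>
            (\<forall>(r :: nat rel) p. inR r p \<longrightarrow> inQ (sigma (osum r oo) (stack r oo p rD))))
       \<and> (\<exists>rM. inR oo rM \<and>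
            (\<forall>\<phi>. inQ \<phi> \<longrightarrow> (\<exists>rr. inR oo rr \<and> sq_subst (sigma oo rM) \<phi> = sigma oo rr)))"
proof -
  let ?r = "univ_cond id_sq"
  have r: "inR oo ?r" by (rule inR_univ_cond[OF inQ_id_sq])
  have sigma_r: "sigma oo ?r = enum_sq" unfolding sigma_univ_cond sq_subst_id_sq ..
  have stacked: "inQ (sigma (osum r oo) (stack r oo p ?r))" if "inR r p" for r :: "nat rel" and p
    unfolding sigma_stack[OF that Well_order_oo] sigma_r by (rule inQ_sq_subst_enum_sq[OF that])
  have realised: "\<exists>rr. inR oo rr \<and> sq_subst (sigma oo ?r) \<phi> = sigma oo rr" if "inQ \<phi>" for \<phi>
    using inR_univ_cond[OF that]
    by (intro exI[of _ "univ_cond \<phi>"]) (simp add: sigma_univ_cond sq_subst_id_sq)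
  show ?thesis
    using r sigma_r inQ_enum_sq stacked realised by (intro conjI exI[of _ ?r]) auto
qed

end
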